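(* Let $(\gamma_\nu)_{\nu\ge 0}$ be complex numbers, let $f(z)=\sum_{\nu=0}^{\infty}\gamma_\nu z^\nu$ be the corresponding formal power series, and let $f_n(z)=\sum_{\nu=0}^{n}\gamma_\nu z^\nu$ be its partial sums. Work in the field $\mathbb{C}((z))$ of formal Laurent series. Define numbers $C_k^{(n)}$ by $C_0^{(n)}=-\gamma_{n+1}$ and $C_{k+1}^{(n)}=C_k^{(n+2)}-\bigl[C_k^{(n+1)}\bigr]^2/C_k^{(n)}$ for $k,n\in\mathbb{N}_0$, and assume that $C_k^{(n)}\neq 0$ for all $k,n\in\mathbb{N}_0$ (in particular $\gamma_\nu\ne 0$ for all $\nu\ge1$). Let $\mathcal{A}_k^{(n)}$ be Aitken's iterated $\Delta^2$ process applied to $s_n=f_n(z)$: $\mathcal{A}_0^{(n)}=f_n(z)$, $\mathcal{A}_{k+1}^{(n)}=\mathcal{A}_k^{(n)}-\bigl[\Delta\mathcal{A}_k^{(n)}\bigr]^2/\Delta^2\mathcal{A}_k^{(n)}$, where $\Delta$ acts on the superscript: $\Delta\mathcal{A}_k^{(n)}=\mathcal{A}_k^{(n+1)}-\mathcal{A}_k^{(n)}$. Then all $\mathcal{A}_k^{(n)}$ are well defined elements of $\mathbb{C}[[z]]$, and for all $k,n\in\mathbb{N}_0$: (i) $\mathcal{A}_k^{(n)}=f(z)+z^{n+2k+1}R_k^{(n)}(z)$ with $R_k^{(n)}(z)\in\mathbb{C}[[z]]$ having constant term $C_k^{(n)}$; in particular $f(z)-\mathcal{A}_k^{(n)}=O(z^{n+2k+1})$;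 (ii) $\mathcal{A}_k^{(n)}=f_{n+2k}(z)+G_k^{(n)}z^{n+2k+1}+O(z^{n+2k+2})$, where $G_k^{(n)}=C_k^{(n)}+\gamma_{n+2k+1}$ and the numbers $G_k^{(n)}$ satisfy $G_0^{(n)}=0$, $G_1^{(n)}=\gamma_{n+2}^2/\gamma_{n+1}$, and $G_{k+1}^{(n)}=G_k^{(n+2)}+\dfrac{\bigl[\gamma_{n+2k+2}-G_k^{(n+1)}\bigr]^2}{\gamma_{n+2k+1}-G_k^{(n)}}$ for $k,n\in\mathbb{N}_0$.
   Context: $\mathbb{N}_0=\{0,1,2,\dots\}$. $O(z^m)$ denotes an element of $z^m\mathbb{C}[[z]]$. The number $G_k^{(n)}$ is interpreted as the prediction for the coefficient $\gamma_{n+2k+1}$, the first coefficient not used in computing $\mathcal{A}_k^{(n)}$ (which uses $f_n,\dots,f_{n+2k}$). *)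

theory Defs
  imports Complex_Main "HOL-Computational_Algebra.Formal_Laurent_Series"
begin

definition fser :: "(nat \<Rightarrow> complex) \<Rightarrow> complex fps" where
  "fser \<gamma> = Abs_fps \<gamma>"

definition fpart :: "(nat \<Rightarrow> complex) \<Rightarrow> nat \<Rightarrow> complex fps" where
  "fpart \<gamma> n = Abs_fps (\<lambda>i. if i \<le> n then \<gamma> i else 0)"

fun Cn :: "(nat \<Rightarrow> complex) \<Rightarrow> nat \<Rightarrow> nat \<Rightarrow> complex" where
  "Cn \<gamma> 0 n = - \<gamma> (n + 1)"
| "Cn \<gamma> (Suc k) n = Cn \<gamma> k (n + 2) - (Cn \<gamma> k (n + 1))^2 / Cn \<gamma> k n"

definition Gn :: "(nat \<Rightarrow> complex) \<Rightarrow> nat \<Rightarrow> nat \<Rightarrow> complex" where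
  "Gn \<gamma> k n = Cn \<gamma> k n + \<gamma> (n + 2 * k + 1)"

fun Aitken :: "(nat \<Rightarrow> complex) \<Rightarrow> nat \<Rightarrow> nat \<Rightarrow> complex fls" where
  "Aitken \<gamma> 0 n = fps_to_fls (fpart \<gamma> n)"
| "Aitken \<gamma> (Suc k) n =
     Aitken \<gamma> k n - (Aitken \<gamma> k (n + 1) - Aitken \<gamma> k n)^2
       / (Aitken \<gamma> k (n + 2) - 2 * Aitken \<gamma> k (n + 1) + Aitken \<gamma> k n)"

end

theory Submission
  imports Defs
begin

text \<open>
  Write three consecutive terms as s_j = F + X^(m+j) r_j with a common limit F. One Aitken
  step keeps this shape, with the exponent raised by two and the new tail
  (r_0 r_2 - r_1^2) / (X^2 r_2 - 2 X r_1 + r_0). For power series in X = z the denominator is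
  a unit as soon as r_0(0) is nonzero, and the constant term of the new tail is
  r_2(0) - r_1(0)^2 / r_0(0): exactly the recursion defining C_k^(n). Starting from
  f_n = f - z^(n+1) (gamma_(n+1) + ...), induction on k gives (i); (ii) is (i) with the
  coefficient of z^(n+2k+1) in f split off.
\<close>

lemma second_difference_tail_form:
  fixes F X r0 r1 r2 :: "'a::comm_ring_1"
  shows "(F + X^(m+2)*r2) - 2*(F + X^(m+1)*r1) + (F + X^m*r0) = X^m * (X^2*r2 - 2*X*r1 + r0)"
  by (simp add: algebra_simps power_add power2_eq_square)

lemma aitken_update_tail_form:
  fixes F X r0 r1 r2 :: "'a::field"
  defines "d \<equiv> X^2*r2 - 2*X*r1 + r0"
  assumes X: "X \<noteq> 0" and d: "d \<noteq> 0"
  shows "(F + X^m*r0) - ((F + X^(m+1)*r1) - (F + X^m*r0))^2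
           / ((F + X^(m+2)*r2) - 2*(F + X^(m+1)*r1) + (F + X^m*r0))
         = F + X^(m+2) * ((r0*r2 - r1^2) / d)"
proof -
  have Xm: "X^m \<noteq> 0" using X by simp
  have first_difference: "(F + X^(m+1)*r1) - (F + X^m*r0) = X^m * (X*r1 - r0)"
    by (simp add: algebra_simps)
  have "r0*d - (X*r1 - r0)^2 = X^2 * (r0*r2 - r1^2)"
    unfolding d_def by (simp add: algebra_simps power2_eq_square)
  then have tail: "r0 - (X*r1 - r0)^2 / d = X^2 * ((r0*r2 - r1^2) / d)"
    using d by (simp add: field_simps)
  have "(X^m * (X*r1 - r0))^2 / (X^m * d) = X^m * ((X*r1 - r0)^2 / d)"
    using Xm X d by (simp add: power_mult_distrib power2_eq_square)
  then have "(F + X^m*r0) - (X^m * (X*r1 - r0))^2 / (X^m * d) = F + X^m * (r0 - (X*r1 - r0)^2 / d)"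
    by (simp add: algebra_simps)
  also have "\<dots> = F + X^(m+2) * ((r0*r2 - r1^2) / d)"
    unfolding tail by (simp add: power_add power2_eq_square)
  finally show ?thesis
    using first_difference second_difference_tail_form[of F X m r2 r1 r0] X by (simp add: d_def)
qed

lemma aitken_step_fls_tail_form:
  fixes F :: "'a::field fls" and R0 R1 R2 :: "'a fps" and m :: nat
  defines "s0 \<equiv> F + fls_X^m * fps_to_fls R0"
    and "s1 \<equiv> F + fls_X^(m+1) * fps_to_fls R1"
    and "s2 \<equiv> F + fls_X^(m+2) * fps_to_fls R2"
  assumes R0: "R0$0 \<noteq> 0"
  shows "s2 - 2*s1 + s0 \<noteq> 0"
    and "\<exists>R. s0 - (s1 - s0)^2 / (s2 - 2*s1 + s0) = F + fls_X^(m+2) * fps_to_fls R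
             \<and> R$0 = R2$0 - (R1$0)^2 / R0$0"
proof -
  define D where "D = fps_X^2*R2 - 2*fps_X*R1 + R0"
  have D0: "D$0 = R0$0"
    by (simp add: D_def fps_mult_nth_0 numeral_2_eq_2)
  have D_fls: "fps_to_fls D = fls_X^2 * fps_to_fls R2 - 2 * fls_X * fps_to_fls R1 + fps_to_fls R0"
    by (simp add: D_def fls_times_fps_to_fls fps_to_fls_power)
  have D_nz: "fps_to_fls D \<noteq> 0"
    using D0 R0 by auto
  show "s2 - 2*s1 + s0 \<noteq> 0"
    using D_nz unfolding s0_def s1_def s2_def second_difference_tail_form D_fls by simp
  have inverse_D: "inverse (fps_to_fls D) = fps_to_fls (inverse D)"
    using D0 R0 by (intro fls_inverse_fps_to_fls) (simp add: subdegree_eq_0)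
  define R where "R = (R0*R2 - R1^2) * inverse D"
  have "s0 - (s1 - s0)^2 / (s2 - 2*s1 + s0)
        = F + fls_X^(m+2) * ((fps_to_fls R0 * fps_to_fls R2 - (fps_to_fls R1)^2) / fps_to_fls D)"
    unfolding s0_def s1_def s2_def D_fls
    by (rule aitken_update_tail_form) (use D_nz D_fls in simp_all)
  also have "\<dots> = F + fls_X^(m+2) * fps_to_fls R"
    by (simp add: R_def divide_inverse inverse_D fls_times_fps_to_fls fps_to_fls_power)
  finally show "\<exists>R. s0 - (s1 - s0)^2 / (s2 - 2*s1 + s0) = F + fls_X^(m+2) * fps_to_fls R
                  \<and> R$0 = R2$0 - (R1$0)^2 / R0$0"
    using D0 R0 by (intro exI[of _ R]) (simp add: R_def power2_eq_square field_simps)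
qed

lemma fpart_eq_fser_plus_tail:
  "fps_to_fls (fpart \<gamma> n) = fps_to_fls (fser \<gamma>) + fls_X^(n+1) * fps_to_fls (Abs_fps (\<lambda>i. - \<gamma> (i+n+1)))"
proof -
  have "fpart \<gamma> n = fser \<gamma> + fps_X^(n+1) * Abs_fps (\<lambda>i. - \<gamma> (i+n+1))"
    by (rule fps_ext) (simp only: fps_add_nth fps_X_power_mult_nth, auto simp: fpart_def fser_def)
  then show ?thesis
    by (simp add: fls_times_fps_to_fls fps_to_fls_power)
qed

lemma Aitken_tail_form:
  fixes \<gamma> :: "nat \<Rightarrow> complex"
  assumes nz: "\<And>k n. Cn \<gamma> k n \<noteq> 0"
  shows "\<exists>R. Aitken \<gamma> k n = fps_to_fls (fser \<gamma>) + fls_X^(n+2*k+1) * fps_to_fls R \<and> R$0 = Cn \<gamma> k n"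
proof (induction k arbitrary: n)
  case 0
  show ?case
    using fpart_eq_fser_plus_tail by fastforce
next
  case (Suc k)
  define m where "m = n + 2*k + 1"
  obtain R0 R1 R2 where
    R0: "Aitken \<gamma> k n = fps_to_fls (fser \<gamma>) + fls_X^m * fps_to_fls R0" "R0$0 = Cn \<gamma> k n" and
    R1: "Aitken \<gamma> k (n+1) = fps_to_fls (fser \<gamma>) + fls_X^(m+1) * fps_to_fls R1" "R1$0 = Cn \<gamma> k (n+1)" and
    R2: "Aitken \<gamma> k (n+2) = fps_to_fls (fser \<gamma>) + fls_X^(m+2) * fps_to_fls R2" "R2$0 = Cn \<gamma> k (n+2)"
    using Suc.IH[of n] Suc.IH[of "n+1"] Suc.IH[of "n+2"] by (auto simp: m_def algebra_simps)
  have "\<exists>R. Aitken \<gamma> (Suc k) n = fps_to_fls (fser \<gamma>) + fls_X^(m+2) * fps_to_fls R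
             \<and> R$0 = R2$0 - (R1$0)^2 / R0$0"
    unfolding Aitken.simps(2) R0(1) R1(1) R2(1)
    by (rule aitken_step_fls_tail_form(2)) (simp add: R0(2) nz)
  moreover have "m + 2 = n + 2 * Suc k + 1"
    by (simp add: m_def)
  ultimately show ?case
    using R0(2) R1(2) R2(2) by auto
qed

lemma fser_tail_form_eq_fpart:
  "\<exists>S. fps_to_fls (fser \<gamma>) + fls_X^(N+1) * fps_to_fls R =
     fps_to_fls (fpart \<gamma> N) + fls_const (R$0 + \<gamma> (N+1)) * fls_X^(N+1) + fls_X^(N+2) * fps_to_fls S"
proof -
  define S where "S = Abs_fps (\<lambda>i. \<gamma> (i+N+2) + R$(i+1))"
  have "fser \<gamma> + fps_X^(N+1) * R = fpart \<gamma> N + fps_X^(N+1) * fps_const (R$0 + \<gamma> (N+1)) + fps_X^(N+2) * S"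
  proof (rule fps_ext)
    fix i
    consider "i \<le> N" | "i = N+1" | j where "i = j + N + 2"
      using that(3)[of "i - (N + 2)"] that(1,2) by linarith
    then show "(fser \<gamma> + fps_X^(N+1) * R) $ i
               = (fpart \<gamma> N + fps_X^(N+1) * fps_const (R$0 + \<gamma> (N+1)) + fps_X^(N+2) * S) $ i"
      unfolding fps_add_nth fps_X_power_mult_nth by cases (simp_all add: S_def fser_def fpart_def)
  qed
  from arg_cong[OF this, of fps_to_fls]
  have "fps_to_fls (fser \<gamma>) + fls_X^(N+1) * fps_to_fls R =
     fps_to_fls (fpart \<gamma> N) + fls_X^(N+1) * fls_const (R$0 + \<gamma> (N+1)) + fls_X^(N+2) * fps_to_fls S"
    by (simp only: fps_to_fls_plus fls_times_fps_to_fls fps_to_fls_power fps_X_to_fls fps_const_to_fls)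
  then show ?thesis
    by (auto simp: mult.commute)
qed

lemma Gn_0: "Gn \<gamma> 0 n = 0"
  by (simp add: Gn_def)

lemma Gn_1: "Gn \<gamma> 1 n = (\<gamma> (n + 2))^2 / \<gamma> (n + 1)"
  by (simp add: Gn_def numeral_2_eq_2)

lemma Gn_Suc:
  "Gn \<gamma> (k + 1) n = Gn \<gamma> k (n + 2)
     + (\<gamma> (n + 2 * k + 2) - Gn \<gamma> k (n + 1))^2 / (\<gamma> (n + 2 * k + 1) - Gn \<gamma> k n)"
  by (simp add: Gn_def algebra_simps power2_eq_square)

theorem mainTheorem1:
  fixes \<gamma> :: "nat \<Rightarrow> complex"
  assumes nz: "\<And>k n. Cn \<gamma> k n \<noteq> 0"
  shows "\<forall>k n.
     (Aitken \<gamma> k (n + 2) - 2 * Aitken \<gamma> k (n + 1) + Aitken \<gamma> k n \<noteq> 0)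
   \<and> (\<exists>F :: complex fps. Aitken \<gamma> k n = fps_to_fls F)
   \<and> (\<exists>R :: complex fps. Aitken \<gamma> k n = fps_to_fls (fser \<gamma>) + fls_X ^ (n + 2 * k + 1) * fps_to_fls R
          \<and> fps_nth R 0 = Cn \<gamma> k n)
   \<and> (\<exists>S :: complex fps. Aitken \<gamma> k n = fps_to_fls (fpart \<gamma> (n + 2 * k))
          + fls_const (Gn \<gamma> k n) * fls_X ^ (n + 2 * k + 1) + fls_X ^ (n + 2 * k + 2) * fps_to_fls S)
   \<and> Gn \<gamma> 0 n = 0
   \<and> Gn \<gamma> 1 n = (\<gamma> (n + 2))^2 / \<gamma> (n + 1)
   \<and> Gn \<gamma> (k + 1) n = Gn \<gamma> k (n + 2)
        + (\<gamma> (n + 2 * k + 2) - Gn \<gamma> k (n + 1))^2 / (\<gamma> (n + 2 * k + 1) - Gn \<gamma> k n)"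
proof (intro allI conjI Gn_0 Gn_1 Gn_Suc)
  fix k n :: nat
  obtain R0 R1 R2 where
    R0: "Aitken \<gamma> k n = fps_to_fls (fser \<gamma>) + fls_X^(n+2*k+1) * fps_to_fls R0" "R0$0 = Cn \<gamma> k n" and
    R1: "Aitken \<gamma> k (n+1) = fps_to_fls (fser \<gamma>) + fls_X^(n+2*k+1+1) * fps_to_fls R1" and
    R2: "Aitken \<gamma> k (n+2) = fps_to_fls (fser \<gamma>) + fls_X^(n+2*k+1+2) * fps_to_fls R2"
    using Aitken_tail_form[OF nz, of k n] Aitken_tail_form[OF nz, of k "n+1"]
      Aitken_tail_form[OF nz, of k "n+2"]
    by (auto simp: algebra_simps)
  show "Aitken \<gamma> k (n + 2) - 2 * Aitken \<gamma> k (n + 1) + Aitken \<gamma> k n \<noteq> 0"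
    unfolding R0(1) R1 R2 by (rule aitken_step_fls_tail_form(1)) (simp add: R0(2) nz)
  show "\<exists>R. Aitken \<gamma> k n = fps_to_fls (fser \<gamma>) + fls_X^(n+2*k+1) * fps_to_fls R \<and> R$0 = Cn \<gamma> k n"
    using R0 by blast
  have "Aitken \<gamma> k n = fps_to_fls (fser \<gamma> + fps_X^(n+2*k+1) * R0)"
    using R0(1) by (simp add: fls_times_fps_to_fls fps_to_fls_power)
  then show "\<exists>F. Aitken \<gamma> k n = fps_to_fls F" ..
  show "\<exists>S. Aitken \<gamma> k n = fps_to_fls (fpart \<gamma> (n + 2 * k))
          + fls_const (Gn \<gamma> k n) * fls_X ^ (n + 2 * k + 1) + fls_X ^ (n + 2 * k + 2) * fps_to_fls S"
    using fser_tail_form_eq_fpart[of \<gamma> "n+2*k" R0] R0 by (simp add: Gn_def add.assoc)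
qed

end
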